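(* Let $Z=(X_1,\dots,X_M)$ be a random vector (full data), $[M]=\{X_1,\dots,X_M\}$, and let $R$ be a random variable taking values in a finite collection $Q$ of nonempty subsets of $[M]$ with $\pi_r=\mathbb{P}(R=r)$ for $r\in Q$. Assume (MCAR) $R$ is independent of $Z$, and (positivity) $[M]\in Q$ with $\pi_{[M]}>c>0$. For $s\subseteq[M]$ let $\lambda_s=\sum_{r\in Q,\ s\subseteq r}\pi_r$, and for $r\in Q$, $r\neq[M]$, define $$\omega_r=\sum_{s:\ r\subseteq s\subseteq[M]}(-1)^{|s|-|r|}\frac{\mathbb{I}(R\supseteq s)}{\lambda_s}.$$ Let $\psi^F:\mathcal{Z}\times\Omega\to\mathbb{R}^d$ and $\theta^\star\in\Omega$ satisfy $\mathbb{E}[\psi^F(Z,\theta^\star)]=\mathbf{0}_d$ with $\mathbb{E}[\psi^F(Z,\theta)^T\psi^F(Z,\theta)]<\infty$. For each $r\in Q$, $r\neq[M]$, let $\mathcal{F}_r$ be a fixed (non-random, e.g. pre-trained) measurable $\mathbb{R}^d$-valued function of $X_r$ with $\mathbb{E}\|\mathcal{F}_r(X_r)\|<\infty$, serving as a proxy either for $\mathbb{E}[\psi^F(Z,\theta^\star)\mid X_r]$ or for $\psi^F(\mathbb{E}[Z\mid X_r],\theta^\star)$. Then for every choice of real numbers $\alpha=\{\alpha_r: r\in Q, r\neq[M]\}$, the function $$\psi_\alpha(Z;\theta^\star)=\frac{\mathbb{I}(R=[M])}{\pi_{[M]}}\psi^F(Z,\theta^\star)+\sum_{r\in Q,\ r\neq[M]}\alpha_r\,\omega_r\,\mathcal{F}_r(X_r)$$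 satisfies $\mathbb{E}[\psi_\alpha(Z;\theta^\star)]=\mathbf{0}_d$, the expectation being over the joint distribution of $(Z,R)$.
   Context: $X_r$ denotes the sub-vector of $Z$ consisting of the modalities in $r$; $\mathbb{I}(\cdot)$ is the indicator function; $|s|$ is the cardinality of $s$. $\Omega\subset\mathbb{R}^d$ is the parameter space and $\mathcal{Z}$ the sample space of $Z$. *)

theory Defs
  imports "HOL-Probability.Probability"
begin

text \<open>Independence of two random variables with values in (possibly) different
  measurable spaces (the library's indep_var requires equal value types).\<close>
definition indep_rv :: "'a measure \<Rightarrow> 'b measure \<Rightarrow> ('a \<Rightarrow> 'b) \<Rightarrow> 'c measure \<Rightarrow> ('a \<Rightarrow> 'c) \<Rightarrow> bool" where
  "indep_rv M Ma A Mb B \<longleftrightarrow>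
     A \<in> measurable M Ma \<and> B \<in> measurable M Mb \<and>
     (\<forall>X\<in>sets Ma. \<forall>Y\<in>sets Mb.
        measure M (A -` X \<inter> B -` Y \<inter> space M) =
        measure M (A -` X \<inter> space M) * measure M (B -` Y \<inter> space M))"

definition pat_prob :: "'a measure \<Rightarrow> ('a \<Rightarrow> 'i set) \<Rightarrow> 'i set \<Rightarrow> real" where
  "pat_prob M R r = measure M {x \<in> space M. R x = r}"

definition lam :: "'a measure \<Rightarrow> ('a \<Rightarrow> 'i set) \<Rightarrow> 'i set set \<Rightarrow> 'i set \<Rightarrow> real" where
  "lam M R Q s = (\<Sum>r\<in>{r\<in>Q. s \<subseteq> r}. pat_prob M R r)"

definition omega :: "'a measure \<Rightarrow> ('a \<Rightarrow> 'i set) \<Rightarrow> 'i set set \<Rightarrow> 'i set \<Rightarrow> 'i set \<Rightarrow> 'a \<Rightarrow> real" where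
  "omega M R Q I r x = (\<Sum>s\<in>{s. r \<subseteq> s \<and> s \<subseteq> I}.
      (-1) ^ (card s - card r) * of_bool (s \<subseteq> R x) / lam M R Q s)"

end

theory Submission
  imports Defs
begin

(* Under MCAR, E[1(s \<subseteq> R) g(Z)] = \<lambda>_s E[g(Z)] for every function g of the full data.
  Hence E[\<omega>_r g(Z)] is E[g(Z)] times the alternating sum of (-1)^(|s|-|r|) over the sets s
  between r and [M], which vanishes because r is a proper subset of [M]. The same factorisation
  gives E[1(R = [M]) \<psi>(Z, \<theta>)] = \<pi>_[M] E[\<psi>(Z, \<theta>)] = 0. *)

lemma sum_supsets_minus_one_power_eq_0:
  assumes "finite I" "r \<subset> I"
  shows "(\<Sum>s | r \<subseteq> s \<and> s \<subseteq> I. (-1::'a::comm_ring_1) ^ (card s - card r)) = 0"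
proof -
  have "(-1::'a) ^ (card s - card r) = (-1) ^ card r * (-1) ^ card s" if "r \<subseteq> s" "s \<subseteq> I" for s
  proof -
    have "card r \<le> card s"
      using that assms(1) by (meson card_mono finite_subset)
    then obtain k where "card s = card r + k"
      using le_iff_add by blast
    then show ?thesis by (simp add: power_add)
  qed
  then have "(\<Sum>s | r \<subseteq> s \<and> s \<subseteq> I. (-1::'a) ^ (card s - card r))
      = (-1) ^ card r * (\<Sum>s | r \<subseteq> s \<and> s \<subseteq> I. (-1) ^ card s)"
    by (simp add: sum_distrib_left)
  also have "(\<Sum>s | r \<subseteq> s \<and> s \<subseteq> I. (-1::'a) ^ card s) = 0"
  proof (rule sum_alternating_cancels)
    show "finite {s. r \<subseteq> s \<and> s \<subseteq> I}"
      using assms(1) by (auto intro: finite_subset[of _ "Pow I"])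
    show "card {s \<in> {s. r \<subseteq> s \<and> s \<subseteq> I}. even (card s)}
        = card {s \<in> {s. r \<subseteq> s \<and> s \<subseteq> I}. odd (card s)}"
      using card_subsupersets_even_odd[OF assms] by (simp add: conj_commute conj_left_commute)
  qed
  finally show ?thesis by simp
qed

lemma pat_prob_le_lam:
  assumes "finite Q" "I \<in> Q" "s \<subseteq> I"
  shows "pat_prob M R I \<le> lam M R Q s"
  unfolding lam_def using assms
  by (intro member_le_sum) (auto simp: pat_prob_def)

lemma omega_scaleR_eq_sum:
  fixes v :: "'c::real_vector"
  shows "omega M R Q I r x *\<^sub>R v
     = (\<Sum>s | r \<subseteq> s \<and> s \<subseteq> I. ((-1) ^ (card s - card r) / lam M R Q s) *\<^sub>R (of_bool (s \<subseteq> R x) *\<^sub>R v))"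
  unfolding omega_def scaleR_sum_left by (intro sum.cong) auto

lemma integrable_of_bool_scaleR:
  fixes f :: "'a \<Rightarrow> 'c::{banach, second_countable_topology}"
  assumes "R \<in> measurable M (count_space UNIV)" "integrable M f"
  shows "integrable M (\<lambda>x. of_bool (R x \<in> A) *\<^sub>R f x)"
proof -
  have "R -` A \<inter> space M \<in> sets M"
    using assms(1) by (rule measurable_sets) simp
  then have "integrable M (\<lambda>x. indicator (R -` A \<inter> space M) x *\<^sub>R f x)"
    using assms(2) by (rule integrable_mult_indicator)
  moreover have "integrable M (\<lambda>x. of_bool (R x \<in> A) *\<^sub>R f x)
      \<longleftrightarrow> integrable M (\<lambda>x. indicator (R -` A \<inter> space M) x *\<^sub>R f x)"
    by (intro Bochner_Integration.integrable_cong) (auto simp: indicator_def)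
  ultimately show ?thesis by simp
qed

lemma integrable_omega_scaleR:
  fixes f :: "'a \<Rightarrow> 'c::{banach, second_countable_topology}"
  assumes "R \<in> measurable M (count_space UNIV)" "integrable M f"
  shows "integrable M (\<lambda>x. omega M R Q I r x *\<^sub>R f x)"
  unfolding omega_scaleR_eq_sum
  using integrable_of_bool_scaleR[OF assms, of "{t. _ \<subseteq> t}"]
  by (intro Bochner_Integration.integrable_sum integrable_scaleR_right) simp

lemma (in finite_measure) inner_self_integrable_imp_integrable:
  fixes f :: "'a \<Rightarrow> 'b::{real_inner, banach, second_countable_topology}"
  assumes "f \<in> borel_measurable M" "integrable M (\<lambda>x. f x \<bullet> f x)"
  shows "integrable M f"
proof (rule Bochner_Integration.integrable_bound)
  show "integrable M (\<lambda>x. 1 + f x \<bullet> f x)"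
    using assms(2) by simp
  have "norm v \<le> 1 + v \<bullet> v" for v :: 'b
  proof -
    have "0 \<le> (norm v - 1)\<^sup>2" by simp
    then have "2 * norm v \<le> 1 + v \<bullet> v"
      by (simp add: power2_diff power2_norm_eq_inner)
    then show ?thesis
      using norm_ge_zero[of v] by linarith
  qed
  then show "AE x in M. norm (f x) \<le> norm (1 + f x \<bullet> f x)"
    by simp
qed fact

context prob_space
begin

lemma distr_density_event_indep_rv:
  fixes R :: "'a \<Rightarrow> 'r" and A :: "'r set"
  assumes indep: "indep_rv M (count_space UNIV) R N Z"
  defines "E \<equiv> R -` A \<inter> space M"
  shows "distr (density M (\<lambda>x. ennreal (indicator E x))) N Z = density (distr M N Z) (\<lambda>_. ennreal (prob E))"
proof (rule measure_eqI)
  have Z_meas: "Z \<in> measurable M N" and E_event: "E \<in> events"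
    using indep by (auto simp: indep_rv_def E_def)
  fix B assume "B \<in> sets (distr (density M (\<lambda>x. ennreal (indicator E x))) N Z)"
  then have B: "B \<in> sets N" by simp
  have ZB: "Z -` B \<inter> space M \<in> events" using Z_meas B by (rule measurable_sets)
  have "emeasure (distr (density M (\<lambda>x. ennreal (indicator E x))) N Z) B
      = emeasure M (E \<inter> (Z -` B \<inter> space M))"
    using Z_meas B E_event ZB
    by (simp add: emeasure_distr emeasure_density ennreal_indicator flip: indicator_inter_arith)
  also have "E \<inter> (Z -` B \<inter> space M) = R -` A \<inter> Z -` B \<inter> space M"
    by (auto simp: E_def)
  also have "emeasure M \<dots> = ennreal (prob E * prob (Z -` B \<inter> space M))"
    using indep B unfolding indep_rv_def E_def by (simp add: emeasure_eq_measure)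
  also have "\<dots> = emeasure (density (distr M N Z) (\<lambda>_. ennreal (prob E))) B"
    using Z_meas B by (simp add: emeasure_density_const emeasure_distr emeasure_eq_measure ennreal_mult)
  finally show "emeasure (distr (density M (\<lambda>x. ennreal (indicator E x))) N Z) B
      = emeasure (density (distr M N Z) (\<lambda>_. ennreal (prob E))) B" .
qed simp

lemma integral_of_bool_scaleR_indep_rv:
  fixes R :: "'a \<Rightarrow> 'r" and A :: "'r set"
    and g :: "'b \<Rightarrow> 'c::{banach, second_countable_topology}"
  assumes indep: "indep_rv M (count_space UNIV) R N Z" and g: "g \<in> borel_measurable N"
  shows "(\<integral>x. of_bool (R x \<in> A) *\<^sub>R g (Z x) \<partial>M) = prob {x \<in> space M. R x \<in> A} *\<^sub>R (\<integral>x. g (Z x) \<partial>M)"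
proof -
  define E where "E = R -` A \<inter> space M"
  have Z_meas: "Z \<in> measurable M N" and E_event: "E \<in> events"
    using indep by (auto simp: indep_rv_def E_def)
  have "(\<integral>x. of_bool (R x \<in> A) *\<^sub>R g (Z x) \<partial>M) = (\<integral>x. indicator E x *\<^sub>R g (Z x) \<partial>M)"
    by (intro Bochner_Integration.integral_cong) (auto simp: E_def indicator_def)
  also have "\<dots> = integral\<^sup>L (distr (density M (\<lambda>x. ennreal (indicator E x))) N Z) g"
    using E_event Z_meas g by (simp add: integral_density integral_distr)
  also have "\<dots> = prob E *\<^sub>R integral\<^sup>L (distr M N Z) g"
    using g by (simp add: distr_density_event_indep_rv[OF indep] E_def integral_density)
  also have "\<dots> = prob {x \<in> space M. R x \<in> A} *\<^sub>R (\<integral>x. g (Z x) \<partial>M)"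
    using Z_meas g by (simp add: integral_distr E_def Collect_conj_eq Int_commute vimage_def)
  finally show ?thesis .
qed

lemma prob_supset_pattern_eq_lam:
  assumes "R \<in> measurable M (count_space UNIV)" "\<forall>x\<in>space M. R x \<in> Q" "finite Q"
  shows "prob {x \<in> space M. s \<subseteq> R x} = lam M R Q s"
proof -
  have "{x \<in> space M. s \<subseteq> R x} = (\<Union>r\<in>{r\<in>Q. s \<subseteq> r}. {x \<in> space M. R x = r})"
    using assms(2) by auto
  also have "prob \<dots> = (\<Sum>r\<in>{r\<in>Q. s \<subseteq> r}. prob {x \<in> space M. R x = r})"
    using assms(1,3) by (intro finite_measure_finite_Union) (auto simp: disjoint_family_on_def)
  finally show ?thesis by (simp add: lam_def pat_prob_def)
qed

lemma integral_omega_scaleR_eq_0: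
  fixes g :: "'b \<Rightarrow> 'c::{banach, second_countable_topology}"
  assumes indep: "indep_rv M (count_space UNIV) R N Z"
    and R_Q: "\<forall>x\<in>space M. R x \<in> Q" and "finite Q" "finite I" "I \<in> Q"
    and "pat_prob M R I > 0" "r \<subset> I"
    and g: "g \<in> borel_measurable N" "integrable M (\<lambda>x. g (Z x))"
  shows "(\<integral>x. omega M R Q I r x *\<^sub>R g (Z x) \<partial>M) = 0"
proof -
  let ?S = "{s. r \<subseteq> s \<and> s \<subseteq> I}"
  have R_meas: "R \<in> measurable M (count_space UNIV)"
    using indep by (simp add: indep_rv_def)
  have lam_nonzero: "lam M R Q s \<noteq> 0" if "s \<in> ?S" for s
    using pat_prob_le_lam[of Q I s M R] that assms by auto
  have "(\<integral>x. omega M R Q I r x *\<^sub>R g (Z x) \<partial>M)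
      = (\<Sum>s\<in>?S. ((-1) ^ (card s - card r) / lam M R Q s) *\<^sub>R (\<integral>x. of_bool (s \<subseteq> R x) *\<^sub>R g (Z x) \<partial>M))"
    unfolding omega_scaleR_eq_sum
    using integrable_of_bool_scaleR[OF R_meas g(2), of "{t. _ \<subseteq> t}"]
    by (subst Bochner_Integration.integral_sum) (simp_all del: scaleR_scaleR)
  also have "\<dots> = (\<Sum>s\<in>?S. ((-1) ^ (card s - card r) / lam M R Q s) *\<^sub>R (lam M R Q s *\<^sub>R (\<integral>x. g (Z x) \<partial>M)))"
    using integral_of_bool_scaleR_indep_rv[OF indep g(1), of "{t. _ \<subseteq> t}"]
      prob_supset_pattern_eq_lam[OF R_meas R_Q \<open>finite Q\<close>]
    by simp
  also have "\<dots> = (\<Sum>s\<in>?S. (-1::real) ^ (card s - card r)) *\<^sub>R (\<integral>x. g (Z x) \<partial>M)"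
    unfolding scaleR_sum_left by (intro sum.cong) (auto simp: lam_nonzero)
  also have "\<dots> = 0"
    using sum_supsets_minus_one_power_eq_0[where 'a=real, OF \<open>finite I\<close> \<open>r \<subset> I\<close>] by simp
  finally show ?thesis .
qed

end

theorem proposition2:
  fixes M :: "'a measure"
    and I :: "'i set"
    and N :: "'i \<Rightarrow> 'b measure"
    and Z :: "'a \<Rightarrow> ('i \<Rightarrow> 'b)"
    and R :: "'a \<Rightarrow> 'i set"
    and Q :: "'i set set"
    and c :: real
    and psi :: "('i \<Rightarrow> 'b) \<Rightarrow> real^'d \<Rightarrow> real^'d"
    and \<Omega> :: "(real^'d) set"
    and \<theta> :: "real^'d"
    and F :: "'i set \<Rightarrow> ('i \<Rightarrow> 'b) \<Rightarrow> real^'d"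
    and \<alpha> :: "'i set \<Rightarrow> real"
  assumes "prob_space M"
    and "finite I"
    and Z_rv: "Z \<in> measurable M (PiM I N)"
    and R_rv: "R \<in> measurable M (count_space UNIV)"
    and R_Q: "\<forall>x\<in>space M. R x \<in> Q"
    and "finite Q"
    and Q_sub: "\<forall>r\<in>Q. r \<noteq> {} \<and> r \<subseteq> I"
    and MCAR: "indep_rv M (count_space UNIV) R (PiM I N) Z"
    and "I \<in> Q"
    and "c > 0"
    and "pat_prob M R I > c"
    and "\<theta> \<in> \<Omega>"
    and psi_meas: "(\<lambda>z. psi z \<theta>) \<in> borel_measurable (PiM I N)"
    and psi_mean: "prob_space.expectation M (\<lambda>x. psi (Z x) \<theta>) = 0"
    and psi_sq: "integrable M (\<lambda>x. (psi (Z x) \<theta>) \<bullet> (psi (Z x) \<theta>))"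
    and F_meas: "\<forall>r\<in>Q - {I}. F r \<in> borel_measurable (PiM r N)"
    and F_int: "\<forall>r\<in>Q - {I}. integrable M (\<lambda>x. F r (restrict (Z x) r))"
  shows "integrable M (\<lambda>x. (of_bool (R x = I) / pat_prob M R I) *\<^sub>R psi (Z x) \<theta>
            + (\<Sum>r\<in>Q - {I}. (\<alpha> r * omega M R Q I r x) *\<^sub>R F r (restrict (Z x) r)))
       \<and> prob_space.expectation M (\<lambda>x. (of_bool (R x = I) / pat_prob M R I) *\<^sub>R psi (Z x) \<theta>
            + (\<Sum>r\<in>Q - {I}. (\<alpha> r * omega M R Q I r x) *\<^sub>R F r (restrict (Z x) r))) = 0"
proof -
  interpret prob_space M by fact
  have psi_int: "integrable M (\<lambda>x. psi (Z x) \<theta>)"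
    using measurable_compose[OF Z_rv psi_meas] psi_sq by (rule inner_self_integrable_imp_integrable)
  have complete_case_int: "integrable M (\<lambda>x. (of_bool (R x = I) / pat_prob M R I) *\<^sub>R psi (Z x) \<theta>)"
    using integrable_of_bool_scaleR[OF R_rv psi_int, of "{I}"]
      integrable_scaleR_right[where c = "1 / pat_prob M R I"]
    by fastforce
  have complete_case_mean: "(\<integral>x. (of_bool (R x = I) / pat_prob M R I) *\<^sub>R psi (Z x) \<theta> \<partial>M) = 0"
    using integral_scaleR_right[where c = "1 / pat_prob M R I" and f = "\<lambda>x. of_bool (R x \<in> {I}) *\<^sub>R psi (Z x) \<theta>"]
      integral_of_bool_scaleR_indep_rv[OF MCAR psi_meas, of "{I}"] psi_mean
    by simp
  have "pat_prob M R I > 0"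
    using \<open>c > 0\<close> \<open>pat_prob M R I > c\<close> by simp
  have augmentation: "integrable M (\<lambda>x. (\<alpha> r * omega M R Q I r x) *\<^sub>R F r (restrict (Z x) r))"
    "(\<integral>x. (\<alpha> r * omega M R Q I r x) *\<^sub>R F r (restrict (Z x) r) \<partial>M) = 0"
    if r: "r \<in> Q - {I}" for r
  proof -
    have "r \<subset> I"
      using Q_sub r by blast
    have F_restrict_meas: "(\<lambda>z. F r (restrict z r)) \<in> borel_measurable (PiM I N)"
      using F_meas r
      by (blast intro: measurable_compose[OF measurable_restrict_subset[OF psubset_imp_subset[OF \<open>r \<subset> I\<close>]]])
    show "integrable M (\<lambda>x. (\<alpha> r * omega M R Q I r x) *\<^sub>R F r (restrict (Z x) r))"
      using integrable_omega_scaleR[OF R_rv, of "\<lambda>x. F r (restrict (Z x) r)"] F_int r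
      by (simp flip: scaleR_scaleR)
    show "(\<integral>x. (\<alpha> r * omega M R Q I r x) *\<^sub>R F r (restrict (Z x) r) \<partial>M) = 0"
      using integral_omega_scaleR_eq_0[OF MCAR R_Q \<open>finite Q\<close> \<open>finite I\<close> \<open>I \<in> Q\<close>
          \<open>pat_prob M R I > 0\<close> \<open>r \<subset> I\<close> F_restrict_meas] F_int r
      by (simp flip: scaleR_scaleR)
  qed
  have augmentation_int: "integrable M (\<lambda>x. \<Sum>r\<in>Q - {I}. (\<alpha> r * omega M R Q I r x) *\<^sub>R F r (restrict (Z x) r))"
    by (intro Bochner_Integration.integrable_sum augmentation)
  have augmentation_mean: "(\<integral>x. (\<Sum>r\<in>Q - {I}. (\<alpha> r * omega M R Q I r x) *\<^sub>R F r (restrict (Z x) r)) \<partial>M) = 0"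
    by (subst Bochner_Integration.integral_sum) (simp_all add: augmentation)
  show ?thesis
    using complete_case_int complete_case_mean augmentation_int augmentation_mean
    by (simp add: Bochner_Integration.integral_add)
qed

end
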